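(* Let $p=1$, $0<q<1$, $\lambda>0$, and $K:=(v\lambda q(1-q))^{\frac1{2-q}}$. Let $\{x^k\}$ be generated by PGM-GSO with stepsize $0<v<\frac12\|A\|_2^{-2}$. Then: (i) for every $i\in\{1,\dots,r\}$ and every $k\ge1$, if $x^k_{\mathcal{G}_i}\ne0$ then $\|x^k_{\mathcal{G}_i}\|_1\ge K$; (ii) there exist $N\in\mathbb{N}$ and $\mathcal{I}\subseteq\{1,\dots,r\}$ such that for all $k\ge N$: $x^k_{\mathcal{G}_i}\ne0$ for $i\in\mathcal{I}$ and $x^k_{\mathcal{G}_i}=0$ for $i\notin\mathcal{I}$.
   Context: Group structure: $\{1,\dots,n\}$ is partitioned into disjoint nonempty index sets $\mathcal{G}_1,\dots,\mathcal{G}_r$; $x_{\mathcal{G}_i}$ is the subvector indexed by $\mathcal{G}_i$; $\|x\|_{1,q}^q:=\sum_{i=1}^r\|x_{\mathcal{G}_i}\|_1^q$. Given $A\in\mathbb{R}^{m\times n}$, $b\in\mathbb{R}^m$, PGM-GSO: choose $x^0\in\mathbb{R}^n$ and for $k\ge0$ set $z^k=x^k-2vA^\top(Ax^k-b)$ and choose $x^{k+1}\in\operatorname{Arg\,min}_{x\in\mathbb{R}^n}\{\lambda\|x\|_{1,q}^q+\frac1{2v}\|x-z^k\|_2^2\}$. *)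

theory Defs
  imports "HOL-Analysis.Analysis"
begin

definition group_partition :: "(nat \<Rightarrow> 'n set) \<Rightarrow> nat \<Rightarrow> bool" where
  "group_partition G r \<longleftrightarrow>
     (\<forall>i\<in>{1..r}. G i \<noteq> {}) \<and>
     (\<forall>i\<in>{1..r}. \<forall>j\<in>{1..r}. i \<noteq> j \<longrightarrow> G i \<inter> G j = {}) \<and>
     (\<Union>i\<in>{1..r}. G i) = UNIV"

definition group_l1 :: "('n::finite) set \<Rightarrow> real^'n \<Rightarrow> real" where
  "group_l1 S x = (\<Sum>j\<in>S. \<bar>x $ j\<bar>)"

definition group_nonzero :: "('n::finite) set \<Rightarrow> real^'n \<Rightarrow> bool" where
  "group_nonzero S x \<longleftrightarrow> (\<exists>j\<in>S. x $ j \<noteq> 0)"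

definition norm_1q_pow :: "(nat \<Rightarrow> ('n::finite) set) \<Rightarrow> nat \<Rightarrow> real \<Rightarrow> real^'n \<Rightarrow> real" where
  "norm_1q_pow G r q x = (\<Sum>i=1..r. (group_l1 (G i) x) powr q)"

definition pgm_gso ::
  "(nat \<Rightarrow> ('n::finite) set) \<Rightarrow> nat \<Rightarrow> real \<Rightarrow> real \<Rightarrow> real \<Rightarrow> real^'n^'m \<Rightarrow> real^'m
     \<Rightarrow> (nat \<Rightarrow> real^'n) \<Rightarrow> bool" where
  "pgm_gso G r q lam v A b xs \<longleftrightarrow>
     (\<forall>k. let z = xs k - (2 * v) *\<^sub>R (transpose A *v (A *v xs k - b)) in
        \<forall>y. lam * norm_1q_pow G r q (xs (Suc k)) + (1 / (2 * v)) * (norm (xs (Suc k) - z))\<^sup>2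
            \<le> lam * norm_1q_pow G r q y + (1 / (2 * v)) * (norm (y - z))\<^sup>2)"

end

theory Submission
  imports Defs "HOL-Real_Asymp.Real_Asymp"
begin

text \<open>Part (i) is a second-order optimality condition: if a nonzero block \<open>x\<^sub>G\<close> of the proximal
  minimiser is scaled by \<open>1 \<pm> h\<close>, minimality of both perturbations gives
  \<open>v \<lambda> s\<^sup>q (2 - (1+h)\<^sup>q - (1-h)\<^sup>q) \<le> h\<^sup>2 s\<^sup>2\<close> with \<open>s = \<parallel>x\<^sub>G\<parallel>\<^sub>1\<close>; letting \<open>h \<rightarrow> 0\<close> yields
  \<open>v \<lambda> q (1-q) \<le> s\<^bsup>2-q\<^esup>\<close>. For part (ii), the step size makes
  \<open>\<parallel>Ax - b\<parallel>\<^sup>2 + \<lambda>\<parallel>x\<parallel>\<^sub>1\<^sub>,\<^sub>q\<^sup>q\<close> decrease by a multiple of \<open>\<parallel>x\<^bsup>k+1\<^esup> - x\<^sup>k\<parallel>\<^sup>2\<close>, so the steps tend to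
  zero; once they are smaller than the gap \<open>K\<close> of part (i), no block can switch between
  zero and nonzero.\<close>

definition group_support :: "(nat \<Rightarrow> ('n::finite) set) \<Rightarrow> nat \<Rightarrow> real^'n \<Rightarrow> nat set" where
  "group_support G r x = {i \<in> {1..r}. group_nonzero (G i) x}"

definition scale_group :: "('n::finite) set \<Rightarrow> real \<Rightarrow> real^'n \<Rightarrow> real^'n" where
  "scale_group S t x = (\<chi> j. if j \<in> S then t * x$j else x$j)"

lemma group_l1_nonneg: "group_l1 S x \<ge> 0"
  unfolding group_l1_def by (intro sum_nonneg) simp

lemma norm_1q_pow_nonneg: "norm_1q_pow G r q x \<ge> 0"
  unfolding norm_1q_pow_def by (intro sum_nonneg) simp

lemma group_l1_scale_group_same:
  assumes "t \<ge> 0"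
  shows "group_l1 S (scale_group S t x) = t * group_l1 S x"
  unfolding group_l1_def scale_group_def using assms
  by (simp add: sum_distrib_left abs_mult)

lemma group_l1_scale_group_disjoint:
  assumes "S \<inter> T = {}"
  shows "group_l1 S (scale_group T t x) = group_l1 S x"
  unfolding group_l1_def scale_group_def using assms
  by (intro sum.cong) auto

lemma norm_1q_pow_scale_group:
  assumes gp: "group_partition G r" and i: "i \<in> {1..r}" and t: "t \<ge> 0"
  shows "norm_1q_pow G r q (scale_group (G i) t x)
       = norm_1q_pow G r q x - group_l1 (G i) x powr q + (t * group_l1 (G i) x) powr q"
proof -
  let ?y = "scale_group (G i) t x"
  have other: "group_l1 (G i') ?y = group_l1 (G i') x" if "i' \<in> {1..r} - {i}" for i'
    using gp i that unfolding group_partition_def by (intro group_l1_scale_group_disjoint) auto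
  have split: "norm_1q_pow G r q y
      = group_l1 (G i) y powr q + (\<Sum>i'\<in>{1..r}-{i}. group_l1 (G i') y powr q)" for y
    unfolding norm_1q_pow_def using i by (simp add: sum.remove)
  show ?thesis
    unfolding split[of ?y] split[of x] using other t
    by (simp add: group_l1_scale_group_same)
qed

lemma norm_sq_scale_group_second_difference:
  fixes x z :: "real^'n::finite"
  shows "(norm (scale_group S (1+h) x - z))\<^sup>2 + (norm (scale_group S (1-h) x - z))\<^sup>2
           - 2 * (norm (x - z))\<^sup>2
       = 2 * h\<^sup>2 * (\<Sum>j\<in>S. (x$j)\<^sup>2)"
proof -
  have norm_sq: "(norm w)\<^sup>2 = (\<Sum>j\<in>UNIV. (w$j)\<^sup>2)" for w :: "real^'n"
    unfolding power2_norm_eq_inner inner_vec_def by (simp add: power2_eq_square)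
  have "2 * h\<^sup>2 * (\<Sum>j\<in>S. (x$j)\<^sup>2) = (\<Sum>j\<in>UNIV. if j \<in> S then 2 * h\<^sup>2 * (x$j)\<^sup>2 else 0)"
    by (simp add: sum.If_cases sum_distrib_left)
  also have "\<dots> = (\<Sum>j\<in>UNIV. ((if j\<in>S then (1+h)*x$j else x$j) - z$j)\<^sup>2
       + ((if j\<in>S then (1-h)*x$j else x$j) - z$j)\<^sup>2 - 2 * (x$j - z$j)\<^sup>2)"
    by (intro sum.cong) (auto simp: power2_eq_square algebra_simps)
  finally show ?thesis
    unfolding norm_sq scale_group_def by (simp add: sum.distrib sum_subtractf sum_distrib_left)
qed

lemma sum_sq_le_group_l1_sq:
  fixes x :: "real^'n::finite"
  shows "(\<Sum>j\<in>S. (x$j)\<^sup>2) \<le> (group_l1 S x)\<^sup>2"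
proof -
  have "(\<Sum>j\<in>S. (x$j)\<^sup>2) \<le> (\<Sum>j\<in>S. \<bar>x$j\<bar> * group_l1 S x)"
  proof (intro sum_mono)
    fix j assume "j \<in> S"
    hence "\<bar>x$j\<bar> \<le> group_l1 S x"
      unfolding group_l1_def by (intro member_le_sum) auto
    thus "(x$j)\<^sup>2 \<le> \<bar>x$j\<bar> * group_l1 S x"
      by (metis abs_ge_zero mult_left_mono power2_abs power2_eq_square)
  qed
  also have "\<dots> = (group_l1 S x)\<^sup>2"
    unfolding group_l1_def by (simp add: sum_distrib_right power2_eq_square)
  finally show ?thesis .
qed

lemma group_l1_pos_if_nonzero:
  assumes "group_nonzero S x"
  shows "group_l1 S x > 0"
proof -
  obtain j where j: "j \<in> S" "x$j \<noteq> 0"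
    using assms unfolding group_nonzero_def by blast
  have "\<bar>x$j\<bar> \<le> group_l1 S x"
    unfolding group_l1_def using j by (intro member_le_sum) auto
  with j show ?thesis by simp
qed

lemma group_l1_le_norm_diff_if_zero:
  fixes x y :: "real^'n::finite"
  assumes "\<not> group_nonzero S y"
  shows "group_l1 S x \<le> real CARD('n) * norm (y - x)"
proof -
  have "group_l1 S x \<le> (\<Sum>j\<in>S. norm (y - x))"
    unfolding group_l1_def
  proof (intro sum_mono)
    fix j assume "j \<in> S"
    hence "\<bar>x$j\<bar> = \<bar>(y - x)$j\<bar>"
      using assms unfolding group_nonzero_def by auto
    thus "\<bar>x$j\<bar> \<le> norm (y - x)"
      using component_le_norm_cart by metis
  qed
  also have "\<dots> \<le> real CARD('n) * norm (y - x)"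
    by (simp add: card_mono mult_right_mono)
  finally show ?thesis .
qed

lemma second_difference_powr_tendsto:
  fixes q :: real
  assumes "0 < q" "q < 1"
  shows "((\<lambda>h. (2 - (1+h) powr q - (1-h) powr q) / h\<^sup>2) \<longlongrightarrow> q * (1 - q)) (at_right 0)"
  using assms by (real_asymp simp: algebra_simps)

lemma prox_minimizer_scale_group_ineq:
  assumes gp: "group_partition G r" and i: "i \<in> {1..r}"
    and lam: "0 < lam" and v: "0 < v" and h: "0 \<le> h" "h \<le> 1"
    and min: "\<And>y. lam * norm_1q_pow G r q x + (1 / (2 * v)) * (norm (x - z))\<^sup>2
                 \<le> lam * norm_1q_pow G r q y + (1 / (2 * v)) * (norm (y - z))\<^sup>2"
  shows "v * lam * group_l1 (G i) x powr q * (2 - (1+h) powr q - (1-h) powr q)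
           \<le> h\<^sup>2 * (group_l1 (G i) x)\<^sup>2"
proof -
  define s where "s = group_l1 (G i) x"
  have s0: "s \<ge> 0" unfolding s_def by (rule group_l1_nonneg)
  have penalty: "norm_1q_pow G r q (scale_group (G i) t x)
      = norm_1q_pow G r q x - s powr q + t powr q * s powr q" if "t \<ge> 0" for t
    using norm_1q_pow_scale_group[OF gp i that] that s0 unfolding s_def
    by (simp add: powr_mult)
  have quad: "(norm (scale_group (G i) (1+h) x - z))\<^sup>2 + (norm (scale_group (G i) (1-h) x - z))\<^sup>2
      - 2 * (norm (x - z))\<^sup>2 \<le> 2 * h\<^sup>2 * s\<^sup>2"
    unfolding norm_sq_scale_group_second_difference s_def
    using mult_left_mono[OF sum_sq_le_group_l1_sq[where S="G i" and x=x], of "2 * h\<^sup>2"] by simp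
  have "lam * (s powr q * (2 - (1+h) powr q - (1-h) powr q)) \<le>
      (1 / (2 * v)) * ((norm (scale_group (G i) (1+h) x - z))\<^sup>2
        + (norm (scale_group (G i) (1-h) x - z))\<^sup>2 - 2 * (norm (x - z))\<^sup>2)"
    using min[of "scale_group (G i) (1+h) x"] min[of "scale_group (G i) (1-h) x"] h
    by (simp add: penalty algebra_simps)
  also have "\<dots> \<le> h\<^sup>2 * s\<^sup>2 / v"
    using mult_left_mono[OF quad, of "1 / (2 * v)"] v by simp
  finally show ?thesis
    unfolding s_def[symmetric] using v by (simp add: field_simps)
qed

lemma prox_minimizer_group_l1_lower_bound:
  assumes gp: "group_partition G r" and i: "i \<in> {1..r}"
    and q: "0 < q" "q < 1" and lam: "0 < lam" and v: "0 < v"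
    and min: "\<And>y. lam * norm_1q_pow G r q x + (1 / (2 * v)) * (norm (x - z))\<^sup>2
                 \<le> lam * norm_1q_pow G r q y + (1 / (2 * v)) * (norm (y - z))\<^sup>2"
    and nz: "group_nonzero (G i) x"
  shows "(v * lam * q * (1 - q)) powr (1 / (2 - q)) \<le> group_l1 (G i) x"
proof -
  define s where "s = group_l1 (G i) x"
  have s0: "s > 0" unfolding s_def using nz by (rule group_l1_pos_if_nonzero)
  define c where "c = v * lam * s powr q"
  have c0: "c > 0" unfolding c_def using v lam s0 by simp
  have "eventually (\<lambda>h. (2 - (1+h) powr q - (1-h) powr q) / h\<^sup>2 \<le> s\<^sup>2 / c) (at_right 0)"
  proof (rule eventually_at_rightI[of 0 1])
    fix h :: real assume "h \<in> {0<..<1}"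
    then show "(2 - (1+h) powr q - (1-h) powr q) / h\<^sup>2 \<le> s\<^sup>2 / c"
      using prox_minimizer_scale_group_ineq[OF gp i lam v _ _ min, of h] c0
      unfolding s_def[symmetric] c_def[symmetric] by (simp add: field_simps)
  qed simp
  then have "q * (1 - q) \<le> s\<^sup>2 / c"
    by (intro tendsto_upperbound[OF second_difference_powr_tendsto[OF q]]) simp_all
  then have "q * (1 - q) * (v * lam * s powr q) \<le> s\<^sup>2"
    using c0 unfolding c_def by (simp add: pos_le_divide_eq)
  then have "v * lam * q * (1 - q) \<le> s\<^sup>2 / s powr q"
    using s0 by (simp add: pos_le_divide_eq ac_simps)
  also have "\<dots> = s powr (2 - q)"
    using s0 by (simp add: powr_diff powr_numeral)
  finally have "(v * lam * q * (1 - q)) powr (1 / (2 - q)) \<le> (s powr (2 - q)) powr (1 / (2 - q))"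
    using q v lam by (intro powr_mono2) auto
  also have "\<dots> = s" using s0 q by (simp add: powr_powr)
  finally show ?thesis unfolding s_def .
qed

lemma power2_norm_add: "(norm ((d::'a::real_inner) + u))\<^sup>2 = (norm d)\<^sup>2 + 2 * (d \<bullet> u) + (norm u)\<^sup>2"
  by (simp add: power2_norm_eq_inner inner_add_left inner_add_right inner_commute)

lemma prox_grad_sufficient_decrease:
  fixes A :: "real^'n::finite^'m::finite" and P :: "real^'n \<Rightarrow> real"
  assumes v: "0 < v"
    and z: "z = x0 - (2 * v) *\<^sub>R (transpose A *v (A *v x0 - b))"
    and min: "P x1 + (1 / (2 * v)) * (norm (x1 - z))\<^sup>2 \<le> P x0 + (1 / (2 * v)) * (norm (x0 - z))\<^sup>2"
  shows "(norm (A *v x1 - b))\<^sup>2 + P x1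
     \<le> (norm (A *v x0 - b))\<^sup>2 + P x0
        - (1 / (2 * v) - (onorm (\<lambda>x. A *v x))\<^sup>2) * (norm (x1 - x0))\<^sup>2"
proof -
  define d where "d = x1 - x0"
  define w where "w = A *v x0 - b"
  define g where "g = transpose A *v w"
  have "x1 - z = d + (2 * v) *\<^sub>R g" "x0 - z = (2 * v) *\<^sub>R g"
    unfolding z d_def g_def w_def by simp_all
  then have "(norm (x1 - z))\<^sup>2 = (norm d)\<^sup>2 + 4 * v * (d \<bullet> g) + (norm (x0 - z))\<^sup>2"
    by (simp add: power2_norm_add)
  with min have "P x1 + (1 / (2 * v)) * ((norm d)\<^sup>2 + 4 * v * (d \<bullet> g)) \<le> P x0"
    by (simp add: algebra_simps)
  moreover have "(1 / (2 * v)) * ((norm d)\<^sup>2 + 4 * v * (d \<bullet> g)) = (norm d)\<^sup>2 / (2 * v) + 2 * (d \<bullet> g)"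
    using v by (simp add: field_simps)
  ultimately have prox: "P x1 + (norm d)\<^sup>2 / (2 * v) + 2 * (d \<bullet> g) \<le> P x0"
    by simp
  have "w \<bullet> (A *v d) = d \<bullet> g"
    unfolding g_def transpose_matrix_vector dot_lmul_matrix[symmetric] by (simp add: inner_commute)
  then have residual: "(norm (A *v x1 - b))\<^sup>2 = (norm w)\<^sup>2 + 2 * (d \<bullet> g) + (norm (A *v d))\<^sup>2"
    using power2_norm_add[of w "A *v d"] unfolding d_def w_def by (simp add: algebra_simps)
  have "norm (A *v d) \<le> onorm (\<lambda>x. A *v x) * norm d"
    using onorm[OF matrix_vector_mul_bounded_linear[of A]] by simp
  then have "(norm (A *v d))\<^sup>2 \<le> (onorm (\<lambda>x. A *v x))\<^sup>2 * (norm d)\<^sup>2"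
    by (metis norm_ge_zero power_mono power_mult_distrib)
  with prox residual have "(norm (A *v x1 - b))\<^sup>2 + P x1
      \<le> (norm w)\<^sup>2 + P x0 - ((norm d)\<^sup>2 / (2 * v) - (onorm (\<lambda>x. A *v x))\<^sup>2 * (norm d)\<^sup>2)"
    by linarith
  then show ?thesis
    unfolding d_def[symmetric] w_def[symmetric] by (simp add: left_diff_distrib)
qed

lemma sufficient_decrease_imp_tendsto_zero:
  fixes F D :: "nat \<Rightarrow> real"
  assumes c: "0 < c" and bdd: "\<And>k. B \<le> F k"
    and dec: "\<And>k. F (Suc k) \<le> F k - c * (D k)\<^sup>2"
  shows "D \<longlonglongrightarrow> 0"
proof -
  have gain: "0 \<le> c * (D k)\<^sup>2" for k
    using c by simp
  have "F (Suc k) \<le> F k" for k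
    using dec[of k] gain[of k] by linarith
  then have "decseq F"
    by (simp add: decseq_Suc_iff)
  moreover have "\<forall>k. B \<le> F k"
    using bdd by blast
  ultimately obtain L where lim: "F \<longlonglongrightarrow> L" "\<forall>k. L \<le> F k"
    by (rule decseq_convergent)
  have "(\<lambda>k. (D k)\<^sup>2) \<longlonglongrightarrow> 0"
  proof (rule tendsto_sandwich)
    show "\<forall>\<^sub>F k in sequentially. 0 \<le> (D k)\<^sup>2"
      by simp
    show "\<forall>\<^sub>F k in sequentially. (D k)\<^sup>2 \<le> (F k - F (Suc k)) / c"
      using dec c by (simp add: field_simps)
    show "(\<lambda>k. 0) \<longlonglongrightarrow> 0"
      by simp
    have "(\<lambda>k. (F k - F (Suc k)) / c) \<longlonglongrightarrow> (L - L) / c"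
      using tendsto_diff[OF lim(1) LIMSEQ_Suc[OF lim(1)]] by (rule tendsto_divide[OF _ tendsto_const]) (use c in simp)
    then show "(\<lambda>k. (F k - F (Suc k)) / c) \<longlonglongrightarrow> 0"
      by simp
  qed
  then have "(\<lambda>k. sqrt ((D k)\<^sup>2)) \<longlonglongrightarrow> sqrt 0"
    by (rule tendsto_real_sqrt)
  then show ?thesis
    by (simp add: tendsto_rabs_zero_iff)
qed

lemma pgm_gso_minimizer:
  assumes "pgm_gso G r q lam v A b xs"
  shows "lam * norm_1q_pow G r q (xs (Suc k))
           + (1 / (2 * v)) * (norm (xs (Suc k) - (xs k - (2 * v) *\<^sub>R (transpose A *v (A *v xs k - b)))))\<^sup>2
         \<le> lam * norm_1q_pow G r q y
           + (1 / (2 * v)) * (norm (y - (xs k - (2 * v) *\<^sub>R (transpose A *v (A *v xs k - b)))))\<^sup>2"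
  using assms unfolding pgm_gso_def Let_def by blast

lemma pgm_gso_group_l1_lower_bound:
  assumes gp: "group_partition G r" and q: "0 < q" "q < 1" and lam: "0 < lam" and v: "0 < v"
    and pg: "pgm_gso G r q lam v A b xs"
    and i: "i \<in> {1..r}" and k: "1 \<le> k" and nz: "group_nonzero (G i) (xs k)"
  shows "(v * lam * q * (1 - q)) powr (1 / (2 - q)) \<le> group_l1 (G i) (xs k)"
proof -
  obtain k' where k': "k = Suc k'" using k by (cases k) auto
  show ?thesis
    using nz unfolding k'
    by (rule prox_minimizer_group_l1_lower_bound[OF gp i q lam v pgm_gso_minimizer[OF pg]])
qed

lemma pgm_gso_steps_tendsto_zero:
  fixes A :: "real^'n::finite^'m::finite"
  assumes lam: "0 < lam" and v: "0 < v" and step: "v * (onorm (\<lambda>x. A *v x))\<^sup>2 < 1 / 2"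
    and pg: "pgm_gso G r q lam v A b xs"
  shows "(\<lambda>k. norm (xs (Suc k) - xs k)) \<longlonglongrightarrow> 0"
proof (rule sufficient_decrease_imp_tendsto_zero)
  show "0 < 1 / (2 * v) - (onorm (\<lambda>x. A *v x))\<^sup>2"
    using step v by (simp add: field_simps)
  show "0 \<le> (norm (A *v xs k - b))\<^sup>2 + lam * norm_1q_pow G r q (xs k)" for k
    using lam by (simp add: norm_1q_pow_nonneg)
  show "(norm (A *v xs (Suc k) - b))\<^sup>2 + lam * norm_1q_pow G r q (xs (Suc k))
      \<le> (norm (A *v xs k - b))\<^sup>2 + lam * norm_1q_pow G r q (xs k)
        - (1 / (2 * v) - (onorm (\<lambda>x. A *v x))\<^sup>2) * (norm (xs (Suc k) - xs k))\<^sup>2" for k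
    by (rule prox_grad_sufficient_decrease[OF v refl pgm_gso_minimizer[OF pg]])
qed

lemma group_nonzero_eq_if_close:
  fixes x y :: "real^'n::finite"
  assumes "group_nonzero S x \<Longrightarrow> K \<le> group_l1 S x"
    and "group_nonzero S y \<Longrightarrow> K \<le> group_l1 S y"
    and "real CARD('n) * norm (y - x) < K"
  shows "group_nonzero S y = group_nonzero S x"
proof -
  have "group_nonzero S u" if "group_nonzero S w" "K \<le> group_l1 S w"
    "real CARD('n) * norm (u - w) < K" for u w :: "real^'n"
  proof (rule ccontr)
    assume "\<not> group_nonzero S u"
    then have "group_l1 S w \<le> real CARD('n) * norm (u - w)"
      by (rule group_l1_le_norm_diff_if_zero)
    with that show False by linarith
  qed
  then show ?thesis
    using assms by (metis norm_minus_commute)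
qed

lemma group_support_eventually_const:
  fixes xs :: "nat \<Rightarrow> real^'n::finite"
  assumes gap: "\<And>i k. i \<in> {1..r} \<Longrightarrow> 1 \<le> k \<Longrightarrow> group_nonzero (G i) (xs k) \<Longrightarrow> K \<le> group_l1 (G i) (xs k)"
    and K: "0 < K" and steps: "(\<lambda>k. norm (xs (Suc k) - xs k)) \<longlonglongrightarrow> 0"
  shows "\<exists>N. \<forall>k\<ge>N. group_support G r (xs k) = group_support G r (xs N)"
proof -
  have "eventually (\<lambda>k. norm (xs (Suc k) - xs k) < K / real CARD('n)) sequentially"
    using order_tendstoD(2)[OF steps] K by simp
  then obtain N0 where close: "\<And>k. N0 \<le> k \<Longrightarrow> real CARD('n) * norm (xs (Suc k) - xs k) < K"
    unfolding eventually_sequentially by (auto simp: field_simps)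
  have "group_nonzero (G i) (xs (Suc k)) = group_nonzero (G i) (xs k)"
    if "i \<in> {1..r}" "Suc N0 \<le> k" for i k
    by (rule group_nonzero_eq_if_close) (use gap[of i k] gap[of i "Suc k"] close[of k] that in auto)
  then have stable: "group_support G r (xs (Suc k)) = group_support G r (xs k)" if "Suc N0 \<le> k" for k
    unfolding group_support_def using that by blast
  have "group_support G r (xs k) = group_support G r (xs (Suc N0))" if "Suc N0 \<le> k" for k
    using that by (induction k rule: dec_induct) (auto simp: stable)
  then show ?thesis by blast
qed

theorem lemma3p1:
  fixes G :: "nat \<Rightarrow> ('n::finite) set" and r :: nat
    and A :: "real^'n^'m" and b :: "real^'m"
    and q lam v :: real and xs :: "nat \<Rightarrow> real^'n"
  assumes "group_partition G r"
    and "0 < q" and "q < 1" and "0 < lam"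
    and "0 < v" and "v * (onorm (\<lambda>x. A *v x))\<^sup>2 < 1 / 2"
    and "pgm_gso G r q lam v A b xs"
  shows "(\<forall>i\<in>{1..r}. \<forall>k\<ge>1. group_nonzero (G i) (xs k) \<longrightarrow>
            group_l1 (G i) (xs k) \<ge> (v * lam * q * (1 - q)) powr (1 / (2 - q)))
       \<and> (\<exists>N::nat. \<exists>I. I \<subseteq> {1..r} \<and>
            (\<forall>k\<ge>N. (\<forall>i\<in>I. group_nonzero (G i) (xs k)) \<and>
                    (\<forall>i\<in>{1..r} - I. \<not> group_nonzero (G i) (xs k))))"
proof -
  note gp = assms(1) and q = assms(2,3) and lam = assms(4) and v = assms(5)
    and step = assms(6) and pg = assms(7)
  have gap: "\<And>i k. i \<in> {1..r} \<Longrightarrow> 1 \<le> k \<Longrightarrow> group_nonzero (G i) (xs k) \<Longrightarrow>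
      (v * lam * q * (1 - q)) powr (1 / (2 - q)) \<le> group_l1 (G i) (xs k)"
    by (rule pgm_gso_group_l1_lower_bound[OF gp q lam v pg])
  have "0 < (v * lam * q * (1 - q)) powr (1 / (2 - q))"
    using q lam v by simp
  then obtain N where N: "\<And>k. N \<le> k \<Longrightarrow> group_support G r (xs k) = group_support G r (xs N)"
    using group_support_eventually_const[where G=G and r=r and xs=xs, OF gap _
        pgm_gso_steps_tendsto_zero[OF lam v step pg]]
    by blast
  show ?thesis
  proof (intro conjI exI allI impI ballI)
    show "group_support G r (xs N) \<subseteq> {1..r}"
      unfolding group_support_def by blast
  next
    fix k i assume "N \<le> k" "i \<in> group_support G r (xs N)"
    then show "group_nonzero (G i) (xs k)"
      using N[of k] unfolding group_support_def by blast
  next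
    fix k i assume "N \<le> k" "i \<in> {1..r} - group_support G r (xs N)"
    then show "\<not> group_nonzero (G i) (xs k)"
      using N[of k] unfolding group_support_def by blast
  qed (rule gap)
qed

end
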